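(* For any formula $A$, there exists an adequate $A$-removing mapping $\mathsf{re}_A:\mathcal P\times\mathcal P\to\mathcal P$.
   Context: Formulas are built from $\bot$ and atoms by $\to$ and $\Box$; sequents $\Gamma\Rightarrow\Delta$ have finite multisets of formulas on each side; $\Box\Pi$ denotes $\{\Box B:B\in\Pi\}$. The calculus $\mathsf{Grz}_\infty+\mathsf{cut}$ has initial sequents $\Gamma,p\Rightarrow p,\Delta$ ($p$ atomic), $\Gamma,\bot\Rightarrow\Delta$, and rules $(\to_L)$ from $\Gamma,B\Rightarrow\Delta$ and $\Gamma\Rightarrow A,\Delta$ infer $\Gamma,A\to B\Rightarrow\Delta$; $(\to_R)$ from $\Gamma,A\Rightarrow B,\Delta$ infer $\Gamma\Rightarrow A\to B,\Delta$; $(\mathsf{refl})$ from $\Gamma,B,\Box B\Rightarrow\Delta$ infer $\Gamma,\Box B\Rightarrow\Delta$; $(\Box)$ from left premise $\Gamma,\Box\Pi\Rightarrow A,\Delta$ and right premise $\Box\Pi\Rightarrow A$ infer $\Gamma,\Box\Pi\Rightarrow\Box A,\Delta$; $(\mathsf{cut})$ from $\Gamma\Rightarrow A,\Delta$ and $\Gamma,A\Rightarrow\Delta$ infer $\Gamma\Rightarrow\Delta$. An $\infty$-proof is a possibly infinite tree of sequents built by these rules with leaves labelled by initial sequents, in which every infinite branch passes through a right premise of $(\Box)$ infinitely often; $\mathcal P$ is the set of all $\infty$-proofs. The $n$-fragment of an $\infty$-proof is the finite tree obtained by cutting every branch at the $n$-th (from the root) right premise of $(\Box)$. Write $\pi\sim_n\tau$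 if the $n$-fragments of $\pi,\tau$ coincide, and $\pi\sim_0\tau$ always. $\mathcal P_n$ is the set of $\infty$-proofs with no application of $(\mathsf{cut})$ in their $n$-fragment, and $\mathcal P_0=\mathcal P$. A pair $(\pi,\tau)$ is a cut pair with cut formula $A$ and cut result $\Gamma\Rightarrow\Delta$ if $\pi$ is an $\infty$-proof of $\Gamma\Rightarrow\Delta,A$ and $\tau$ is an $\infty$-proof of $A,\Gamma\Rightarrow\Delta$. A mapping $\mathsf u:\mathcal P\times\mathcal P\to\mathcal P$ is $A$-removing if it is non-expansive (i.e. $\pi\sim_n\pi'$ and $\tau\sim_n\tau'$ imply $\mathsf u(\pi,\tau)\sim_n\mathsf u(\pi',\tau')$ for all $n$) and maps every cut pair with cut formula $A$ to an $\infty$-proof of its cut result. It is adequate if for every $n\in\mathbb N$, $\pi,\tau\in\mathcal P_n$ implies $\mathsf u(\pi,\tau)\in\mathcal P_n$. *)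

theory Defs
  imports Main "HOL-Library.Multiset"
begin

datatype 'a fm = Bot | Atom 'a | Imp "'a fm" "'a fm" | Box "'a fm"

type_synonym 'a sequent = "'a fm multiset \<times> 'a fm multiset"

text \<open>Rule labels of the calculus Grz_infinity + cut.\<close>
datatype rule = Init | ImpL | ImpR | Refl | BoxR | Cut

codatatype 'l ptree = Node (lbl: 'l) (subs: "'l ptree list")

type_synonym 'a dtree = "('a sequent \<times> rule) ptree"

fun seq_of :: "'a dtree \<Rightarrow> 'a sequent" where
  "seq_of t = fst (lbl t)"

fun rule_of :: "'a dtree \<Rightarrow> rule" where
  "rule_of t = snd (lbl t)"

fun sub :: "'l ptree \<Rightarrow> nat list \<Rightarrow> 'l ptree option" where
  "sub t [] = Some t"
| "sub t (i # p) = (if i < length (subs t) then sub (subs t ! i) p else None)"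

definition box_right :: "'a dtree \<Rightarrow> nat \<Rightarrow> bool" where
  "box_right t i \<longleftrightarrow> rule_of t = BoxR \<and> i = 1 \<and> i < length (subs t)"

fun bc :: "'a dtree \<Rightarrow> nat list \<Rightarrow> nat" where
  "bc t [] = 0"
| "bc t (i # p) = (if box_right t i then 1 else 0)
                 + (if i < length (subs t) then bc (subs t ! i) p else 0)"

definition correct_node :: "'a dtree \<Rightarrow> bool" where
  "correct_node t \<longleftrightarrow>
    (let S = seq_of t; ps = map seq_of (subs t) in
     case rule_of t of
       Init \<Rightarrow> ps = [] \<and>
                ((\<exists>\<Gamma> \<Delta> p. S = (\<Gamma> + {#Atom p#}, {#Atom p#} + \<Delta>)) \<or>
                 (\<exists>\<Gamma> \<Delta>. S = (\<Gamma> + {#Bot#}, \<Delta>)))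
     | ImpL \<Rightarrow> (\<exists>\<Gamma> \<Delta> A B. S = (\<Gamma> + {#Imp A B#}, \<Delta>) \<and>
                 ps = [(\<Gamma> + {#B#}, \<Delta>), (\<Gamma>, {#A#} + \<Delta>)])
     | ImpR \<Rightarrow> (\<exists>\<Gamma> \<Delta> A B. S = (\<Gamma>, {#Imp A B#} + \<Delta>) \<and>
                 ps = [(\<Gamma> + {#A#}, {#B#} + \<Delta>)])
     | Refl \<Rightarrow> (\<exists>\<Gamma> \<Delta> B. S = (\<Gamma> + {#Box B#}, \<Delta>) \<and>
                 ps = [(\<Gamma> + {#B#} + {#Box B#}, \<Delta>)])
     | BoxR \<Rightarrow> (\<exists>\<Gamma> \<Pi> \<Delta> A. S = (\<Gamma> + image_mset Box \<Pi>, {#Box A#} + \<Delta>) \<and>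
                 ps = [(\<Gamma> + image_mset Box \<Pi>, {#A#} + \<Delta>), (image_mset Box \<Pi>, {#A#})])
     | Cut \<Rightarrow> (\<exists>\<Gamma> \<Delta> A. S = (\<Gamma>, \<Delta>) \<and>
                 ps = [(\<Gamma>, {#A#} + \<Delta>), (\<Gamma> + {#A#}, \<Delta>)]))"

definition inf_branch :: "'a dtree \<Rightarrow> (nat \<Rightarrow> nat) \<Rightarrow> bool" where
  "inf_branch t f \<longleftrightarrow> (\<forall>k. sub t (map f [0..<Suc k]) \<noteq> None)"

definition is_proof :: "'a dtree \<Rightarrow> bool" where
  "is_proof t \<longleftrightarrow>
     (\<forall>p s. sub t p = Some s \<longrightarrow> correct_node s) \<and>
     (\<forall>f. inf_branch t f \<longrightarrow>
        infinite {k. \<exists>s. sub t (map f [0..<k]) = Some s \<and> box_right s (f k)})"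

definition proofs :: "'a dtree set" where
  "proofs = {t. is_proof t}"

definition proof_of :: "'a dtree \<Rightarrow> 'a sequent \<Rightarrow> bool" where
  "proof_of t S \<longleftrightarrow> is_proof t \<and> seq_of t = S"

text \<open>The n-fragment as a partial map on positions: interior nodes (fewer than n
  right box premises passed) carry their sequent, rule and number of premises;
  the nodes where a branch is cut (the n-th right premise of the box rule) carry
  only their sequent; everything above is removed.\<close>
definition frag :: "nat \<Rightarrow> 'a dtree \<Rightarrow> nat list \<Rightarrow>
                    (('a sequent \<times> rule \<times> nat) + 'a sequent) option" where
  "frag n t p = (case sub t p of
      None \<Rightarrow> None
    | Some s \<Rightarrow>
        if bc t p < n then Some (Inl (seq_of s, rule_of s, length (subs s)))
        else if p \<noteq> [] \<and> bc t p = n \<and> bc t (butlast p) < n then Some (Inr (seq_of s))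
        else None)"

definition sim :: "nat \<Rightarrow> 'a dtree \<Rightarrow> 'a dtree \<Rightarrow> bool" where
  "sim n t u \<longleftrightarrow> n = 0 \<or> frag n t = frag n u"

definition proofs_n :: "nat \<Rightarrow> 'a dtree set" where
  "proofs_n n = {t \<in> proofs. \<forall>p s. sub t p = Some s \<longrightarrow> bc t p < n \<longrightarrow> rule_of s \<noteq> Cut}"

definition non_expansive :: "('a dtree \<Rightarrow> 'a dtree \<Rightarrow> 'a dtree) \<Rightarrow> bool" where
  "non_expansive u \<longleftrightarrow>
     (\<forall>n \<pi> \<pi>' \<tau> \<tau>'. \<pi> \<in> proofs \<longrightarrow> \<pi>' \<in> proofs \<longrightarrow> \<tau> \<in> proofs \<longrightarrow> \<tau>' \<in> proofs \<longrightarrow>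
        sim n \<pi> \<pi>' \<longrightarrow> sim n \<tau> \<tau>' \<longrightarrow> sim n (u \<pi> \<tau>) (u \<pi>' \<tau>'))"

definition removing :: "'a fm \<Rightarrow> ('a dtree \<Rightarrow> 'a dtree \<Rightarrow> 'a dtree) \<Rightarrow> bool" where
  "removing A u \<longleftrightarrow>
     (\<forall>\<pi> \<tau>. \<pi> \<in> proofs \<longrightarrow> \<tau> \<in> proofs \<longrightarrow> u \<pi> \<tau> \<in> proofs) \<and>
     non_expansive u \<and>
     (\<forall>\<pi> \<tau> \<Gamma> \<Delta>. proof_of \<pi> (\<Gamma>, \<Delta> + {#A#}) \<longrightarrow> proof_of \<tau> (\<Gamma> + {#A#}, \<Delta>) \<longrightarrow>
        proof_of (u \<pi> \<tau>) (\<Gamma>, \<Delta>))"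

definition adequate :: "('a dtree \<Rightarrow> 'a dtree \<Rightarrow> 'a dtree) \<Rightarrow> bool" where
  "adequate u \<longleftrightarrow> (\<forall>n \<pi> \<tau>. \<pi> \<in> proofs_n n \<longrightarrow> \<tau> \<in> proofs_n n \<longrightarrow> u \<pi> \<tau> \<in> proofs_n n)"

end

theory Submission
  imports Defs "HOL-Library.Product_Lexorder"
begin

(* Cut elimination by semantics. Infinity-proofs, with or without cut, are sound for models
   whose worlds carry a natural-number rank and in which Box A, if false at a world where A
   holds, is refuted at a world of strictly smaller rank that keeps all boxed truths: along a
   falsified branch the rank drops at every right premise of (Box), and an infinity-proof passes
   such premises infinitely often. Conversely, proof search over the subformulas of the end
   sequent either succeeds, producing a cut-free infinity-proof, or fails; in the latter case
   the refuted sequents, saturated, form such a model falsifying the end sequent, ranked by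
   the stage at which a finite approximation of the greatest fixed point rejects them. Hence
   cut is admissible, and returning a cut-free proof of the cut result is an adequate removing
   mapping. *)

lemma sub_append: "sub t (p @ q) = (case sub t p of None \<Rightarrow> None | Some s \<Rightarrow> sub s q)"
  by (induction p arbitrary: t) auto

lemma sub_snoc:
  "sub t (p @ [i]) =
     (case sub t p of None \<Rightarrow> None | Some s \<Rightarrow> if i < length (subs s) then Some (subs s ! i) else None)"
  by (simp add: sub_append split: option.split)

primcorec ptree_unfold :: "('s \<Rightarrow> 'l) \<Rightarrow> ('s \<Rightarrow> 's list) \<Rightarrow> 's \<Rightarrow> 'l ptree" where
  "ptree_unfold lab kids s = Node (lab s) (map (ptree_unfold lab kids) (kids s))"

fun descend :: "('s \<Rightarrow> 's list) \<Rightarrow> 's \<Rightarrow> nat list \<Rightarrow> 's" where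
  "descend kids s [] = s"
| "descend kids s (i # p) = descend kids (kids s ! i) p"

lemma descend_snoc: "descend kids s (p @ [i]) = kids (descend kids s p) ! i"
  by (induction p arbitrary: s) auto

abbreviation box_right_steps :: "'a dtree \<Rightarrow> (nat \<Rightarrow> nat) \<Rightarrow> nat set" where
  "box_right_steps t f \<equiv> {k. \<exists>s. sub t (map f [0..<k]) = Some s \<and> box_right s (f k)}"

lemma nat_seq_no_infinite_descent:
  fixes r :: "nat \<Rightarrow> nat"
  assumes antimono: "\<And>k. r (Suc k) \<le> r k" and descents: "infinite {k. r (Suc k) < r k}"
  shows False
proof -
  obtain k0 where min: "\<And>k. r k0 \<le> r k"
    using ex_has_least_nat[of "\<lambda>_. True" 0 r] by blast
  obtain k where "k \<ge> k0" "r (Suc k) < r k"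
    using descents by (metis (mono_tags, lifting) finite_nat_set_iff_bounded_le mem_Collect_eq nat_le_linear)
  with lift_Suc_antimono_le[of r, OF antimono] min[of "Suc k"] show False
    by fastforce
qed

lemma branch_descent_contradiction:
  fixes r :: "'x \<Rightarrow> nat"
  assumes branches: "\<And>f. inf_branch t f \<Longrightarrow> infinite (box_right_steps t f)"
    and start: "P t x0"
    and step: "\<And>s x. P s x \<Longrightarrow>
      \<exists>i y. i < length (subs s) \<and> P (subs s ! i) y \<and> r y \<le> r x \<and> (box_right s i \<longrightarrow> r y < r x)"
  shows False
proof -
  have "\<forall>s x. \<exists>iy. P s x \<longrightarrow> fst iy < length (subs s) \<and> P (subs s ! fst iy) (snd iy) \<and>
      r (snd iy) \<le> r x \<and> (box_right s (fst iy) \<longrightarrow> r (snd iy) < r x)"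
    using step by fastforce
  then obtain nxt where nxt: "\<And>s x. P s x \<Longrightarrow>
      fst (nxt s x) < length (subs s) \<and> P (subs s ! fst (nxt s x)) (snd (nxt s x)) \<and>
      r (snd (nxt s x)) \<le> r x \<and> (box_right s (fst (nxt s x)) \<longrightarrow> r (snd (nxt s x)) < r x)"
    by metis
  define walk where "walk = rec_nat (t, x0) (\<lambda>_ (s, x). (subs s ! fst (nxt s x), snd (nxt s x)))"
  define f where "f k = fst (nxt (fst (walk k)) (snd (walk k)))" for k
  have walk: "sub t (map f [0..<k]) = Some (fst (walk k)) \<and> P (fst (walk k)) (snd (walk k))" for k
  proof (induction k)
    case 0
    then show ?case
      using start by (simp add: walk_def)
  next
    case (Suc k)
    with nxt[of "fst (walk k)" "snd (walk k)"] show ?case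
      by (auto simp: walk_def f_def sub_snoc split: prod.split)
  qed
  then have "inf_branch t f"
    unfolding inf_branch_def by (metis option.distinct(1))
  then have "infinite (box_right_steps t f)"
    by (rule branches)
  moreover have rank_step: "r (snd (walk (Suc k))) \<le> r (snd (walk k)) \<and>
      (k \<in> box_right_steps t f \<longrightarrow> r (snd (walk (Suc k))) < r (snd (walk k)))" for k
    using walk[of k] nxt by (auto simp: walk_def f_def split: prod.split)
  ultimately have "infinite {k. r (snd (walk (Suc k))) < r (snd (walk k))}"
    by (elim infinite_super[rotated]) (use rank_step in blast)
  then show False
    by (rule nat_seq_no_infinite_descent[rotated]) (use rank_step in blast)
qed

lemma inf_branch_box_right_infinite:
  fixes r :: "nat list \<Rightarrow> nat"
  assumes branch: "inf_branch t f"
    and descent: "\<And>p s i. sub t p = Some s \<Longrightarrow> i < length (subs s) \<Longrightarrow> \<not> box_right s i \<Longrightarrow>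
      r (p @ [i]) < r p"
  shows "infinite (box_right_steps t f)"
proof
  assume "finite (box_right_steps t f)"
  then obtain m where m: "\<And>k. k \<in> box_right_steps t f \<Longrightarrow> k \<le> m"
    unfolding finite_nat_set_iff_bounded_le by blast
  define K where "K = Suc m"
  have K: "k \<notin> box_right_steps t f" if "K \<le> k" for k
    using m[of k] that unfolding K_def by (meson not_less_eq_eq)
  have step: "r (map f [0..<Suc k]) < r (map f [0..<k])" if "K \<le> k" for k
  proof -
    have "sub t (map f [0..<k] @ [f k]) \<noteq> None"
      using branch unfolding inf_branch_def by (metis map_append list.map upt_Suc_append zero_le)
    then obtain s where s: "sub t (map f [0..<k]) = Some s" "f k < length (subs s)"
      by (auto simp: sub_snoc split: option.splits if_splits)
    then have "\<not> box_right s (f k)"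
      using K[OF that] s(1) by blast
    then show ?thesis
      using descent[OF s] by simp
  qed
  have "r (map f [0..<Suc (K + k)]) < r (map f [0..<K + k])" for k
    by (rule step) simp
  then show False
    using nat_seq_no_infinite_descent[of "\<lambda>k. r (map f [0..<K + k])"] by (simp add: less_imp_le)
qed

section \<open>Soundness for ranked models\<close>

definition falsifies :: "('w \<Rightarrow> 'a fm \<Rightarrow> bool) \<Rightarrow> 'w \<Rightarrow> 'a sequent \<Rightarrow> bool" where
  "falsifies holds w S \<longleftrightarrow> (\<forall>F \<in># fst S. holds w F) \<and> (\<forall>F \<in># snd S. \<not> holds w F)"

text \<open>The ranks make the frame conversely well-founded up to reflexivity, as for Grz.\<close>
locale grz_model =
  fixes world :: "'w \<Rightarrow> bool" and holds :: "'w \<Rightarrow> 'a fm \<Rightarrow> bool" and rank :: "'w \<Rightarrow> nat"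
  assumes not_holds_Bot: "world w \<Longrightarrow> \<not> holds w Bot"
    and holds_Imp: "world w \<Longrightarrow> holds w (Imp A B) \<longleftrightarrow> (holds w A \<longrightarrow> holds w B)"
    and holds_BoxD: "world w \<Longrightarrow> holds w (Box B) \<Longrightarrow> holds w B"
    and refute_Box: "world w \<Longrightarrow> \<not> holds w (Box A) \<Longrightarrow> holds w A \<Longrightarrow>
      \<exists>v. world v \<and> rank v < rank w \<and> \<not> holds v A \<and> (\<forall>B. holds w (Box B) \<longrightarrow> holds v (Box B))"
begin

lemma falsified_premise_same_world:
  assumes "correct_node s" "rule_of s \<noteq> BoxR" "world w" "falsifies holds w (seq_of s)"
  shows "\<exists>c \<in> set (subs s). falsifies holds w (seq_of c)"
proof (cases "rule_of s")
  case Init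
  then show ?thesis
    using assms not_holds_Bot unfolding correct_node_def falsifies_def by (auto simp: Let_def)
next
  case ImpL
  with assms(1) obtain \<Gamma> \<Delta> A B c0 c1 where "seq_of s = (\<Gamma> + {#Imp A B#}, \<Delta>)" "subs s = [c0, c1]"
    "seq_of c0 = (\<Gamma> + {#B#}, \<Delta>)" "seq_of c1 = (\<Gamma>, {#A#} + \<Delta>)"
    unfolding correct_node_def Let_def by (auto simp: map_eq_Cons_conv)
  then show ?thesis
    using assms(3,4) holds_Imp unfolding falsifies_def by (cases "holds w B") auto
next
  case ImpR
  with assms(1) obtain \<Gamma> \<Delta> A B c0 where "seq_of s = (\<Gamma>, {#Imp A B#} + \<Delta>)" "subs s = [c0]"
    "seq_of c0 = (\<Gamma> + {#A#}, {#B#} + \<Delta>)"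
    unfolding correct_node_def Let_def by (auto simp: map_eq_Cons_conv)
  then show ?thesis
    using assms(3,4) holds_Imp unfolding falsifies_def by auto
next
  case Refl
  with assms(1) obtain \<Gamma> \<Delta> B c0 where S: "seq_of s = (\<Gamma> + {#Box B#}, \<Delta>)" and "subs s = [c0]"
    "seq_of c0 = (\<Gamma> + {#B#} + {#Box B#}, \<Delta>)"
    unfolding correct_node_def Let_def by (auto simp: map_eq_Cons_conv)
  moreover have "holds w B"
    using S assms(3,4) holds_BoxD unfolding falsifies_def by simp
  ultimately show ?thesis
    using assms(4) unfolding falsifies_def by auto
next
  case Cut
  with assms(1) obtain \<Gamma> \<Delta> A c0 c1 where "seq_of s = (\<Gamma>, \<Delta>)" "subs s = [c0, c1]"
    "seq_of c0 = (\<Gamma>, {#A#} + \<Delta>)" "seq_of c1 = (\<Gamma> + {#A#}, \<Delta>)"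
    unfolding correct_node_def Let_def by (auto simp: map_eq_Cons_conv)
  then show ?thesis
    using assms(4) unfolding falsifies_def by (cases "holds w A") auto
qed (use assms(2) in simp)

lemma falsified_premise_BoxR:
  assumes "correct_node s" "rule_of s = BoxR" "world w" "falsifies holds w (seq_of s)"
  shows "\<exists>i v. i < length (subs s) \<and> world v \<and> falsifies holds v (seq_of (subs s ! i)) \<and>
    rank v \<le> rank w \<and> (box_right s i \<longrightarrow> rank v < rank w)"
proof -
  obtain \<Gamma> \<Pi> \<Delta> A c0 c1 where
    S: "seq_of s = (\<Gamma> + image_mset Box \<Pi>, {#Box A#} + \<Delta>)" and cs: "subs s = [c0, c1]"
    "seq_of c0 = (\<Gamma> + image_mset Box \<Pi>, {#A#} + \<Delta>)" "seq_of c1 = (image_mset Box \<Pi>, {#A#})"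
    using assms(1,2) unfolding correct_node_def Let_def by (auto simp: map_eq_Cons_conv)
  show ?thesis
  proof (cases "holds w A")
    case False
    then show ?thesis
      using S cs assms(2-4) unfolding falsifies_def box_right_def by (intro exI[of _ 0]) auto
  next
    case True
    moreover have "\<not> holds w (Box A)" "\<forall>B \<in># \<Pi>. holds w (Box B)"
      using S assms(4) unfolding falsifies_def by auto
    ultimately obtain v where "world v" "rank v < rank w" "\<not> holds v A" "\<forall>B \<in># \<Pi>. holds v (Box B)"
      using refute_Box assms(3) by blast
    then show ?thesis
      using cs by (intro exI[of _ 1] exI[of _ v]) (auto simp: falsifies_def)
  qed
qed

lemma falsified_premise:
  assumes "correct_node s" "world w" "falsifies holds w (seq_of s)"
  shows "\<exists>i v. i < length (subs s) \<and> world v \<and> falsifies holds v (seq_of (subs s ! i)) \<and>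
    rank v \<le> rank w \<and> (box_right s i \<longrightarrow> rank v < rank w)"
proof (cases "rule_of s = BoxR")
  case False
  then obtain i where "i < length (subs s)" "falsifies holds w (seq_of (subs s ! i))"
    using falsified_premise_same_world[OF assms(1) False assms(2,3)] by (auto simp: in_set_conv_nth)
  then show ?thesis
    using False assms(2) unfolding box_right_def by blast
qed (use assms falsified_premise_BoxR in blast)

theorem proof_not_falsified:
  assumes "is_proof t" "world w" "falsifies holds w (seq_of t)"
  shows False
proof (rule branch_descent_contradiction[where
      P = "\<lambda>s v. (\<exists>p. sub t p = Some s) \<and> world v \<and> falsifies holds v (seq_of s)" and r = rank])
  show "infinite (box_right_steps t f)" if "inf_branch t f" for f
    using assms(1) that unfolding is_proof_def by blast
  show "(\<exists>p. sub t p = Some t) \<and> world w \<and> falsifies holds w (seq_of t)"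
    using assms(2,3) sub.simps(1) by blast
next
  fix s v
  assume "(\<exists>p. sub t p = Some s) \<and> world v \<and> falsifies holds v (seq_of s)"
  then obtain p where p: "sub t p = Some s" and "world v" "falsifies holds v (seq_of s)"
    by blast
  moreover have "correct_node s"
    using assms(1) p unfolding is_proof_def by blast
  ultimately obtain i u where "i < length (subs s)" "world u" "falsifies holds u (seq_of (subs s ! i))"
      "rank u \<le> rank v" "box_right s i \<longrightarrow> rank u < rank v"
    using falsified_premise by blast
  moreover have "sub t (p @ [i]) = Some (subs s ! i)"
    using p \<open>i < length (subs s)\<close> by (simp add: sub_snoc)
  ultimately show "\<exists>i u. i < length (subs s) \<and>
      ((\<exists>p. sub t p = Some (subs s ! i)) \<and> world u \<and> falsifies holds u (seq_of (subs s ! i))) \<and>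
      rank u \<le> rank v \<and> (box_right s i \<longrightarrow> rank u < rank v)"
    by blast
qed

end

section \<open>Cut-free proof search\<close>

definition cut_free :: "'a dtree \<Rightarrow> bool" where
  "cut_free t \<longleftrightarrow> (\<forall>p s. sub t p = Some s \<longrightarrow> rule_of s \<noteq> Cut)"

definition is_axiom :: "'a fm set \<Rightarrow> 'a fm set \<Rightarrow> bool" where
  "is_axiom L R \<longleftrightarrow> (\<exists>p. Atom p \<in> L \<and> Atom p \<in> R) \<or> Bot \<in> L"

definition boxed :: "'a fm set \<Rightarrow> 'a fm set" where
  "boxed L = L \<inter> range Box"

text \<open>The cut-free rules on set sequents, with premises taken from X except for the right
  premise of (Box), which is taken from P. Between two right premises of (Box) a branch of an
  infinity-proof is finite, so the provable sequents form the greatest fixed point of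
  P \<mapsto> derivable P, where derivable P is a least fixed point.\<close>
definition by_rule :: "('a fm set \<times> 'a fm set) set \<Rightarrow> ('a fm set \<times> 'a fm set) set \<Rightarrow>
    'a fm set \<Rightarrow> 'a fm set \<Rightarrow> bool" where
  "by_rule P X L R \<longleftrightarrow> is_axiom L R \<or>
    (\<exists>A B. Imp A B \<in> L \<and> (L - {Imp A B} \<union> {B}, R) \<in> X \<and> (L - {Imp A B}, R \<union> {A}) \<in> X) \<or>
    (\<exists>A B. Imp A B \<in> R \<and> (L \<union> {A}, R - {Imp A B} \<union> {B}) \<in> X) \<or>
    (\<exists>B. Box B \<in> L \<and> (L \<union> {B}, R) \<in> X) \<or>
    (\<exists>A. Box A \<in> R \<and> (L, R - {Box A} \<union> {A}) \<in> X \<and> (boxed L, {A}) \<in> P)"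

fun derivable_within :: "('a fm set \<times> 'a fm set) set \<Rightarrow> nat \<Rightarrow> ('a fm set \<times> 'a fm set) set" where
  "derivable_within P 0 = {}"
| "derivable_within P (Suc k) = {(L, R). by_rule P (derivable_within P k) L R}"

definition derivable :: "('a fm set \<times> 'a fm set) set \<Rightarrow> ('a fm set \<times> 'a fm set) set" where
  "derivable P = (\<Union>k. derivable_within P k)"

lemma by_rule_BoxR:
  "Box A \<in> R \<Longrightarrow> (L, R - {Box A} \<union> {A}) \<in> X \<Longrightarrow> (boxed L, {A}) \<in> P \<Longrightarrow> by_rule P X L R"
  unfolding by_rule_def by blast

lemma by_rule_mono: "P \<subseteq> P' \<Longrightarrow> X \<subseteq> X' \<Longrightarrow> by_rule P X L R \<Longrightarrow> by_rule P' X' L R"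
  unfolding by_rule_def by blast

lemma derivable_within_mono:
  "k \<le> k' \<Longrightarrow> P \<subseteq> P' \<Longrightarrow> derivable_within P k \<subseteq> derivable_within P' k'"
proof (induction k arbitrary: k')
  case (Suc k)
  then obtain k'' where "k' = Suc k''" "k \<le> k''"
    by (cases k') auto
  with Suc have "by_rule P (derivable_within P k) L R \<Longrightarrow> by_rule P' (derivable_within P' k'') L R"
    for L R
    using by_rule_mono[of P P'] by blast
  with \<open>k' = Suc k''\<close> show ?case
    by auto
qed simp

lemma derivable_mono: "P \<subseteq> P' \<Longrightarrow> derivable P \<subseteq> derivable P'"
  unfolding derivable_def by (intro UN_mono order.refl derivable_within_mono)

lemma derivable_within_common_bound:
  assumes "a \<in> derivable P" "b \<in> derivable P"
  shows "\<exists>k. a \<in> derivable_within P k \<and> b \<in> derivable_within P k"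
proof -
  obtain k1 k2 where "a \<in> derivable_within P k1" "b \<in> derivable_within P k2"
    using assms unfolding derivable_def by blast
  then show ?thesis
    using derivable_within_mono[of k1 "max k1 k2" P P] derivable_within_mono[of k2 "max k1 k2" P P]
    by auto
qed

lemma by_rule_derivable_within:
  assumes "by_rule P (derivable P) L R"
  shows "\<exists>k. by_rule P (derivable_within P k) L R"
proof -
  consider "is_axiom L R"
    | A B where "Imp A B \<in> L"
        "(L - {Imp A B} \<union> {B}, R) \<in> derivable P" "(L - {Imp A B}, R \<union> {A}) \<in> derivable P"
    | A B where "Imp A B \<in> R" "(L \<union> {A}, R - {Imp A B} \<union> {B}) \<in> derivable P"
    | B where "Box B \<in> L" "(L \<union> {B}, R) \<in> derivable P"
    | A where "Box A \<in> R" "(L, R - {Box A} \<union> {A}) \<in> derivable P" "(boxed L, {A}) \<in> P"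
    using assms unfolding by_rule_def by blast
  then show ?thesis
  proof cases
    case 1
    then show ?thesis unfolding by_rule_def by blast
  next
    case (2 A B)
    then show ?thesis
      using derivable_within_common_bound[of "(L - {Imp A B} \<union> {B}, R)" P "(L - {Imp A B}, R \<union> {A})"]
      unfolding by_rule_def by blast
  next
    case (3 A B)
    then show ?thesis
      using derivable_within_common_bound[of "(L \<union> {A}, R - {Imp A B} \<union> {B})"]
      unfolding by_rule_def by blast
  next
    case (4 B)
    then show ?thesis
      using derivable_within_common_bound[of "(L \<union> {B}, R)"] unfolding by_rule_def by blast
  next
    case (5 A)
    then show ?thesis
      using derivable_within_common_bound[of "(L, R - {Box A} \<union> {A})"] unfolding by_rule_def by blast
  qed
qed

lemma derivable_iff_by_rule: "(L, R) \<in> derivable P \<longleftrightarrow> by_rule P (derivable P) L R"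
proof
  assume "(L, R) \<in> derivable P"
  then obtain k where "(L, R) \<in> derivable_within P (Suc k)"
    unfolding derivable_def by (metis UN_iff derivable_within.simps(1) empty_iff not0_implies_Suc)
  then have "by_rule P (derivable_within P k) L R"
    by simp
  then show "by_rule P (derivable P) L R"
    by (rule by_rule_mono[rotated 2]) (auto simp: derivable_def)
next
  assume "by_rule P (derivable P) L R"
  then obtain k where "by_rule P (derivable_within P k) L R"
    using by_rule_derivable_within by blast
  then have "(L, R) \<in> derivable_within P (Suc k)"
    by simp
  then show "(L, R) \<in> derivable P"
    unfolding derivable_def by blast
qed

text \<open>A node of the proof search: the multiset sequent (G, E) to be proved, a derivable set
  sequent (L, R) contained in it, and a bound k on the derivation of (L, R). The bound drops
  at every step except into the right premise of (Box), where the derivation is restarted.\<close>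
datatype 'a search_state = State "'a fm multiset" "'a fm multiset" "'a fm set" "'a fm set" nat

fun goal_of :: "'a search_state \<Rightarrow> 'a sequent" where
  "goal_of (State G E L R k) = (G, E)"

fun bound_of :: "'a search_state \<Rightarrow> nat" where
  "bound_of (State G E L R k) = k"

fun search_inv :: "('a fm set \<times> 'a fm set) set \<Rightarrow> 'a search_state \<Rightarrow> bool" where
  "search_inv N (State G E L R k) \<longleftrightarrow>
     (L, R) \<in> derivable_within N k \<and> L \<subseteq> set_mset G \<and> R \<subseteq> set_mset E"

fun search_step ::
    "('a fm set \<times> 'a fm set) set \<Rightarrow> 'a search_state \<Rightarrow> rule \<Rightarrow> 'a search_state list \<Rightarrow> bool" where
  "search_step N (State G E L R k) r kids \<longleftrightarrow> (case k of 0 \<Rightarrow> False | Suc k' \<Rightarrow>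
    (r = Init \<and> kids = [] \<and> is_axiom L R) \<or>
    (\<exists>A B. r = ImpL \<and> Imp A B \<in> L \<and>
      (L - {Imp A B} \<union> {B}, R) \<in> derivable_within N k' \<and>
      (L - {Imp A B}, R \<union> {A}) \<in> derivable_within N k' \<and>
      kids = [State (G - {#Imp A B#} + {#B#}) E (L - {Imp A B} \<union> {B}) R k',
              State (G - {#Imp A B#}) ({#A#} + E) (L - {Imp A B}) (R \<union> {A}) k']) \<or>
    (\<exists>A B. r = ImpR \<and> Imp A B \<in> R \<and> (L \<union> {A}, R - {Imp A B} \<union> {B}) \<in> derivable_within N k' \<and>
      kids = [State (G + {#A#}) ({#B#} + (E - {#Imp A B#})) (L \<union> {A}) (R - {Imp A B} \<union> {B}) k']) \<or>
    (\<exists>B. r = Refl \<and> Box B \<in> L \<and> (L \<union> {B}, R) \<in> derivable_within N k' \<and>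
      kids = [State (G - {#Box B#} + {#B#} + {#Box B#}) E (L \<union> {B}) R k']) \<or>
    (\<exists>A k2. r = BoxR \<and> Box A \<in> R \<and> (L, R - {Box A} \<union> {A}) \<in> derivable_within N k' \<and>
      (boxed L, {A}) \<in> derivable_within N k2 \<and>
      kids = [State G ({#A#} + (E - {#Box A#})) L (R - {Box A} \<union> {A}) k',
              State (filter_mset (\<lambda>F. F \<in> range Box) G) {#A#} (boxed L) {A} k2]))"

lemma search_step_not_Cut: "search_step N st r kids \<Longrightarrow> r \<noteq> Cut"
  by (cases st) (auto split: nat.splits)

lemma search_step_bound:
  assumes "search_step N st r kids" "i < length kids" "\<not> (r = BoxR \<and> i = 1)"
  shows "bound_of (kids ! i) < bound_of st"
proof -
  obtain G E L R k where st: "st = State G E L R k"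
    by (cases st)
  with assms(1) obtain k' where k: "k = Suc k'"
    by (cases k) auto
  have "bound_of (kids ! i) < Suc k'"
    using assms unfolding st k search_step.simps nat.case
    by (elim disjE exE conjE) (auto simp: less_Suc_eq nth_Cons')
  then show ?thesis
    by (simp add: st k)
qed

lemma search_inv_kids:
  assumes "search_inv N st" "search_step N st r kids" "c \<in> set kids"
  shows "search_inv N c"
proof -
  obtain G E L R k where st: "st = State G E L R k"
    by (cases st)
  with assms(2) obtain k' where k: "k = Suc k'"
    by (cases k) auto
  have diff: "x \<in># M - {#y#}" if "x \<in># M" "x \<noteq> y" for x y :: "'a fm" and M
    using that by (simp add: in_diff_count)
  show ?thesis
    using assms unfolding st k
    by (auto simp: boxed_def dest: diff) (meson diff subset_iff)+
qed

lemma search_step_exists: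
  assumes "search_inv N st" "N \<subseteq> derivable N"
  shows "\<exists>r kids. search_step N st r kids"
proof -
  obtain G E L R k where st: "st = State G E L R k"
    by (cases st)
  with assms(1) obtain k' where k: "k = Suc k'" and "by_rule N (derivable_within N k') L R"
    by (cases k) auto
  then consider "is_axiom L R"
    | A B where "Imp A B \<in> L" "(L - {Imp A B} \<union> {B}, R) \<in> derivable_within N k'"
        "(L - {Imp A B}, R \<union> {A}) \<in> derivable_within N k'"
    | A B where "Imp A B \<in> R" "(L \<union> {A}, R - {Imp A B} \<union> {B}) \<in> derivable_within N k'"
    | B where "Box B \<in> L" "(L \<union> {B}, R) \<in> derivable_within N k'"
    | A where "Box A \<in> R" "(L, R - {Box A} \<union> {A}) \<in> derivable_within N k'" "(boxed L, {A}) \<in> N"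
    unfolding by_rule_def by blast
  then show ?thesis
  proof cases
    case 1
    then show ?thesis
      unfolding st k search_step.simps nat.case by blast
  next
    case (2 A B)
    then show ?thesis
      unfolding st k search_step.simps nat.case by (intro exI[of _ ImpL]) blast
  next
    case (3 A B)
    then show ?thesis
      unfolding st k search_step.simps nat.case by (intro exI[of _ ImpR]) blast
  next
    case (4 B)
    then show ?thesis
      unfolding st k search_step.simps nat.case by (intro exI[of _ Refl]) blast
  next
    case (5 A)
    moreover obtain k2 where "(boxed L, {A}) \<in> derivable_within N k2"
      using 5 assms(2) unfolding derivable_def by blast
    ultimately show ?thesis
      unfolding st k search_step.simps nat.case by (intro exI[of _ BoxR]) blast
  qed
qed

lemma correct_node_Init:
  assumes "is_axiom (set_mset G) (set_mset E)"
  shows "correct_node (Node ((G, E), Init) [])"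
proof -
  have "(\<exists>\<Gamma> \<Delta> p. (G, E) = (\<Gamma> + {#Atom p#}, {#Atom p#} + \<Delta>)) \<or> (\<exists>\<Gamma> \<Delta>. (G, E) = (\<Gamma> + {#Bot#}, \<Delta>))"
    using assms unfolding is_axiom_def by (metis insert_DiffM2 set_mset_add_mset_insert union_commute insert_DiffM)
  then show ?thesis
    unfolding correct_node_def Let_def by simp
qed

lemma correct_node_BoxR:
  assumes "Box A \<in># E"
    and prems: "map seq_of ts = [(G, {#A#} + (E - {#Box A#})), (filter_mset (\<lambda>F. F \<in> range Box) G, {#A#})]"
  shows "correct_node (Node ((G, E), BoxR) ts)"
proof -
  define \<Gamma> where "\<Gamma> = filter_mset (\<lambda>F. F \<notin> range Box) G"
  define \<Pi> where "\<Pi> = image_mset (inv Box) (filter_mset (\<lambda>F. F \<in> range Box) G)"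
  have boxes: "image_mset Box \<Pi> = filter_mset (\<lambda>F. F \<in> range Box) G"
    unfolding \<Pi>_def by (induction G) (auto simp: f_inv_into_f)
  have G: "\<Gamma> + image_mset Box \<Pi> = G"
    unfolding boxes \<Gamma>_def by (simp add: multiset_partition[symmetric])
  have E: "add_mset (Box A) (E - {#Box A#}) = E"
    using assms(1) by simp
  have "\<exists>\<Gamma> \<Pi> \<Delta> A. (G, E) = (\<Gamma> + image_mset Box \<Pi>, {#Box A#} + \<Delta>) \<and>
      map seq_of ts = [(\<Gamma> + image_mset Box \<Pi>, {#A#} + \<Delta>), (image_mset Box \<Pi>, {#A#})]"
    by (rule exI[of _ \<Gamma>], rule exI[of _ \<Pi>], rule exI[of _ "E - {#Box A#}"], rule exI[of _ A])
      (simp add: G E prems flip: boxes)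
  then show ?thesis
    unfolding correct_node_def Let_def by simp
qed

lemma search_step_correct_node:
  assumes "search_inv N st" "search_step N st r kids" "map seq_of ts = map goal_of kids"
  shows "correct_node (Node (goal_of st, r) ts)"
proof -
  obtain G E L R k where st: "st = State G E L R k"
    by (cases st)
  with assms(2) obtain k' where k: "k = Suc k'"
    by (cases k) auto
  have sub: "L \<subseteq> set_mset G" "R \<subseteq> set_mset E"
    using assms(1) st by auto
  from assms(2)[unfolded st k]
  consider (Init) "r = Init" "kids = []" "is_axiom L R"
    | (ImpL) A B where "r = ImpL" "Imp A B \<in> L"
        "kids = [State (G - {#Imp A B#} + {#B#}) E (L - {Imp A B} \<union> {B}) R k',
                 State (G - {#Imp A B#}) ({#A#} + E) (L - {Imp A B}) (R \<union> {A}) k']"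
    | (ImpR) A B where "r = ImpR" "Imp A B \<in> R"
        "kids = [State (G + {#A#}) ({#B#} + (E - {#Imp A B#})) (L \<union> {A}) (R - {Imp A B} \<union> {B}) k']"
    | (Refl) B where "r = Refl" "Box B \<in> L"
        "kids = [State (G - {#Box B#} + {#B#} + {#Box B#}) E (L \<union> {B}) R k']"
    | (BoxR) A k2 where "r = BoxR" "Box A \<in> R"
        "kids = [State G ({#A#} + (E - {#Box A#})) L (R - {Box A} \<union> {A}) k',
                 State (filter_mset (\<lambda>F. F \<in> range Box) G) {#A#} (boxed L) {A} k2]"
    by auto
  then show ?thesis
  proof cases
    case Init
    then have "is_axiom (set_mset G) (set_mset E)" and "ts = []"
      using sub assms(3) unfolding is_axiom_def by auto
    with Init(1) st show ?thesis
      by (simp add: correct_node_Init)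
  next
    case ImpL
    then have "G = G - {#Imp A B#} + {#Imp A B#}"
      using sub by auto
    then show ?thesis
      using ImpL assms(3) st unfolding correct_node_def by (auto simp: Let_def; metis)
  next
    case ImpR
    then have "E = {#Imp A B#} + (E - {#Imp A B#})"
      using sub by auto
    then show ?thesis
      using ImpR assms(3) st unfolding correct_node_def by (auto simp: Let_def; metis)
  next
    case Refl
    then have "G = G - {#Box B#} + {#Box B#}"
      using sub by auto
    then show ?thesis
      using Refl assms(3) st unfolding correct_node_def by (auto simp: Let_def; metis)
  next
    case BoxR
    then have "Box A \<in># E"
      using sub by auto
    with BoxR(1,3) assms(3) st show ?thesis
      by (simp add: correct_node_BoxR)
  qed
qed

definition chosen_step ::
    "('a fm set \<times> 'a fm set) set \<Rightarrow> 'a search_state \<Rightarrow> rule \<times> 'a search_state list" where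
  "chosen_step N st = (SOME rk. search_step N st (fst rk) (snd rk))"

definition search_tree :: "('a fm set \<times> 'a fm set) set \<Rightarrow> 'a search_state \<Rightarrow> 'a dtree" where
  "search_tree N =
     ptree_unfold (\<lambda>st. (goal_of st, fst (chosen_step N st))) (\<lambda>st. snd (chosen_step N st))"

lemma search_step_chosen_step:
  assumes "search_inv N st" "N \<subseteq> derivable N"
  shows "search_step N st (fst (chosen_step N st)) (snd (chosen_step N st))"
proof -
  obtain r kids where "search_step N st r kids"
    using search_step_exists[OF assms] by blast
  then show ?thesis
    unfolding chosen_step_def by (metis fst_conv snd_conv someI)
qed

lemma search_tree_sel:
  "lbl (search_tree N st) = (goal_of st, fst (chosen_step N st))"
  "subs (search_tree N st) = map (search_tree N) (snd (chosen_step N st))"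
  unfolding search_tree_def by simp_all

lemma sub_search_tree:
  assumes "search_inv N st" "N \<subseteq> derivable N" "sub (search_tree N st) p = Some t"
  shows "t = search_tree N (descend (\<lambda>st. snd (chosen_step N st)) st p) \<and>
    search_inv N (descend (\<lambda>st. snd (chosen_step N st)) st p)"
  using assms
proof (induction p arbitrary: st)
  case (Cons i p)
  then have "i < length (snd (chosen_step N st))"
    and sub: "sub (search_tree N (snd (chosen_step N st) ! i)) p = Some t"
    by (auto simp: search_tree_sel split: if_splits)
  then have "search_inv N (snd (chosen_step N st) ! i)"
    using search_inv_kids[OF Cons.prems(1) search_step_chosen_step[OF Cons.prems(1,2)]] by simp
  from Cons.IH[OF this Cons.prems(2) sub] show ?case
    by simp
qed simp

lemma search_tree_cut_free_proof:
  assumes inv: "search_inv N st" and post: "N \<subseteq> derivable N"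
  shows "is_proof (search_tree N st) \<and> cut_free (search_tree N st)"
proof -
  let ?kids = "\<lambda>st. snd (chosen_step N st)"
  let ?t = "search_tree N st"
  have node: "s = search_tree N (descend ?kids st p) \<and> search_inv N (descend ?kids st p) \<and>
      search_step N (descend ?kids st p) (rule_of s) (?kids (descend ?kids st p))"
    if "sub ?t p = Some s" for p s
    using sub_search_tree[OF inv post that] search_step_chosen_step[OF _ post]
    by (auto simp: search_tree_sel)
  have "correct_node s \<and> rule_of s \<noteq> Cut" if "sub ?t p = Some s" for p s
  proof -
    define c where "c = descend ?kids st p"
    have s: "s = search_tree N c" and "search_inv N c" and step: "search_step N c (rule_of s) (?kids c)"
      using node[OF that] unfolding c_def by auto
    have "map seq_of (subs s) = map goal_of (?kids c)"
      by (simp add: s search_tree_sel)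
    then have "correct_node (Node (goal_of c, rule_of s) (subs s))"
      by (rule search_step_correct_node[OF \<open>search_inv N c\<close> step])
    moreover have "Node (goal_of c, rule_of s) (subs s) = s"
      using search_tree_sel(1)[of N c] by (metis prod.collapse fst_conv ptree.collapse rule_of.simps s)
    ultimately show ?thesis
      using search_step_not_Cut[OF step] by simp
  qed
  moreover have "infinite {k. \<exists>s. sub ?t (map f [0..<k]) = Some s \<and> box_right s (f k)}"
    if "inf_branch ?t f" for f
  proof (rule inf_branch_box_right_infinite[OF that, where r = "\<lambda>p. bound_of (descend ?kids st p)"])
    fix p s i assume s: "sub ?t p = Some s" and i: "i < length (subs s)" and "\<not> box_right s i"
    define c where "c = descend ?kids st p"
    have "s = search_tree N c" and step: "search_step N c (rule_of s) (?kids c)"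
      using node[OF s] unfolding c_def by auto
    then have "i < length (?kids c)" "\<not> (rule_of s = BoxR \<and> i = 1)"
      using i \<open>\<not> box_right s i\<close> unfolding box_right_def by (auto simp: search_tree_sel)
    then show "bound_of (descend ?kids st (p @ [i])) < bound_of (descend ?kids st p)"
      using search_step_bound[OF step] unfolding c_def by (simp add: descend_snoc)
  qed
  ultimately show ?thesis
    unfolding is_proof_def cut_free_def by blast
qed

lemma cut_free_proof_of_post_fixed_point:
  assumes "N \<subseteq> derivable N" "(L, R) \<in> N" "L \<subseteq> set_mset G" "R \<subseteq> set_mset E"
  shows "\<exists>t. proof_of t (G, E) \<and> cut_free t"
proof -
  obtain k where "(L, R) \<in> derivable_within N k"
    using assms(1,2) unfolding derivable_def by blast
  then have "search_inv N (State G E L R k)"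
    using assms(3,4) by simp
  then show ?thesis
    using search_tree_cut_free_proof[OF _ assms(1)] unfolding proof_of_def
    by (intro exI[of _ "search_tree N (State G E L R k)"]) (simp add: search_tree_sel)
qed

section \<open>Approximating the provable set sequents\<close>

definition sequents_over :: "'a fm set \<Rightarrow> ('a fm set \<times> 'a fm set) set" where
  "sequents_over C = Pow C \<times> Pow C"

text \<open>Decreasing approximations of the greatest fixed point of P \<mapsto> derivable P within the
  sequents over C.\<close>
fun approx :: "'a fm set \<Rightarrow> nat \<Rightarrow> ('a fm set \<times> 'a fm set) set" where
  "approx C 0 = sequents_over C"
| "approx C (Suc j) = derivable (approx C j) \<inter> sequents_over C"

lemma approx_Suc_subset: "approx C (Suc j) \<subseteq> approx C j"
proof (induction j)
  case (Suc j)
  then show ?case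
    by (simp only: approx.simps) (intro Int_mono derivable_mono order.refl)
qed simp

lemma decreasing_finite_sets_stabilize:
  fixes X :: "nat \<Rightarrow> 'b set"
  assumes "finite (X 0)" and decreasing: "\<And>j. X (Suc j) \<subseteq> X j"
  shows "\<exists>J. X (Suc J) = X J"
proof (rule ccontr)
  assume "\<nexists>J. X (Suc J) = X J"
  then have psubset: "X (Suc j) \<subset> X j" for j
    using decreasing by blast
  have "finite (X j)" for j
    using assms(1) lift_Suc_antimono_le[of X, OF decreasing, of 0 j] finite_subset by blast
  then have shrink: "card (X (Suc j)) < card (X j)" for j
    using psubset psubset_card_mono by blast
  have "card (X j) + j \<le> card (X 0)" for j
  proof (induction j)
    case (Suc j)
    then show ?case
      using shrink[of j] by linarith
  qed simp
  from this[of "Suc (card (X 0))"] show False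
    by simp
qed

lemma approx_stabilizes: "finite C \<Longrightarrow> \<exists>J. approx C (Suc J) = approx C J"
  using decreasing_finite_sets_stabilize[of "approx C", OF _ approx_Suc_subset]
  by (simp add: sequents_over_def)

primrec subfms :: "'a fm \<Rightarrow> 'a fm set" where
  "subfms Bot = {Bot}"
| "subfms (Atom p) = {Atom p}"
| "subfms (Imp A B) = insert (Imp A B) (subfms A \<union> subfms B)"
| "subfms (Box A) = insert (Box A) (subfms A)"

lemma mem_subfms_self: "F \<in> subfms F"
  by (cases F) auto

definition subfm_closed :: "'a fm set \<Rightarrow> bool" where
  "subfm_closed C \<longleftrightarrow> finite C \<and> (\<forall>A B. Imp A B \<in> C \<longrightarrow> A \<in> C \<and> B \<in> C) \<and> (\<forall>A. Box A \<in> C \<longrightarrow> A \<in> C)"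

lemma subfm_closed_subfms: "finite X \<Longrightarrow> subfm_closed (\<Union>F \<in> X. subfms F)"
proof -
  have "Imp A B \<in> subfms F \<Longrightarrow> A \<in> subfms F \<and> B \<in> subfms F"
    and "Box A \<in> subfms F \<Longrightarrow> A \<in> subfms F" for A B F :: "'a fm"
    by (induction F) (auto simp: mem_subfms_self)
  moreover have "finite (subfms F)" for F :: "'a fm"
    by (induction F) auto
  ultimately show "finite X \<Longrightarrow> subfm_closed (\<Union>F \<in> X. subfms F)"
    unfolding subfm_closed_def by blast
qed

section \<open>The countermodel\<close>

definition refuted :: "'a fm set \<Rightarrow> nat \<Rightarrow> 'a fm set \<Rightarrow> 'a fm set \<Rightarrow> bool" where
  "refuted C j L R \<longleftrightarrow> (L, R) \<in> sequents_over C \<and> (L, R) \<notin> derivable (approx C j)"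

datatype 'a world = World
  (cur_L: "'a fm set") (cur_R: "'a fm set") (hist_L: "'a fm set") (hist_R: "'a fm set") (level: nat)

text \<open>A world is a refuted set sequent, saturated under the invertible rules. HL and HR record
  the formulas that have appeared on either side during saturation; each of them has either
  been decomposed or is still present in the current sequent (L, R).\<close>
definition history_inv :: "'a fm set \<Rightarrow> 'a fm set \<Rightarrow> 'a fm set \<Rightarrow> 'a fm set \<Rightarrow> 'a fm set \<Rightarrow> bool" where
  "history_inv C L R HL HR \<longleftrightarrow> L \<subseteq> HL \<and> R \<subseteq> HR \<and> HL \<subseteq> C \<and> HR \<subseteq> C \<and>
     (\<forall>p. Atom p \<in> HL \<longrightarrow> Atom p \<in> L) \<and> (Bot \<in> HL \<longrightarrow> Bot \<in> L) \<and>
     (\<forall>B. Box B \<in> HL \<longrightarrow> Box B \<in> L) \<and> (\<forall>p. Atom p \<in> HR \<longrightarrow> Atom p \<in> R) \<and>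
     (\<forall>A B. Imp A B \<in> HL \<longrightarrow> Imp A B \<in> L \<or> B \<in> HL \<or> A \<in> HR) \<and>
     (\<forall>A B. Imp A B \<in> HR \<longrightarrow> Imp A B \<in> R \<or> (A \<in> HL \<and> B \<in> HR)) \<and>
     (\<forall>A. Box A \<in> HR \<longrightarrow> Box A \<in> R \<or> A \<in> HR)"

definition candidate :: "'a fm set \<Rightarrow> 'a world \<Rightarrow> bool" where
  "candidate C w \<longleftrightarrow> refuted C (level w) (cur_L w) (cur_R w) \<and>
     history_inv C (cur_L w) (cur_R w) (hist_L w) (hist_R w)"

definition saturated :: "'a fm set \<Rightarrow> 'a world \<Rightarrow> bool" where
  "saturated C w \<longleftrightarrow> (\<forall>A B. Imp A B \<notin> cur_L w \<and> Imp A B \<notin> cur_R w) \<and>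
     (\<forall>B. Box B \<in> cur_L w \<longrightarrow> B \<in> hist_L w) \<and>
     (\<forall>A. Box A \<in> cur_R w \<longrightarrow> (cur_L w, cur_R w - {Box A} \<union> {A}) \<in> derivable (approx C (level w)))"

definition is_world :: "'a fm set \<Rightarrow> 'a world \<Rightarrow> bool" where
  "is_world C w \<longleftrightarrow> candidate C w \<and> saturated C w"

definition weight :: "'a fm set \<Rightarrow> nat" where
  "weight X = (\<Sum>F \<in> X. size F)"

lemma weight_insert_le: "finite X \<Longrightarrow> weight (insert b X) \<le> weight X + size b"
  unfolding weight_def by (cases "b \<in> X") (auto simp: insert_absorb)

lemma weight_remove: "finite X \<Longrightarrow> a \<in> X \<Longrightarrow> weight (X - {a}) + size a = weight X"
  unfolding weight_def by (simp add: sum.remove)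

definition sat_measure :: "'a fm set \<Rightarrow> 'a world \<Rightarrow> nat \<times> nat" where
  "sat_measure C w = (card (Box -` C - hist_L w), weight (cur_L w) + weight (cur_R w))"

definition refines :: "'a fm set \<Rightarrow> 'a world \<Rightarrow> 'a world \<Rightarrow> bool" where
  "refines C w v \<longleftrightarrow> candidate C v \<and> level v = level w \<and> sat_measure C v < sat_measure C w \<and>
     boxed (cur_L w) \<subseteq> cur_L v \<and> hist_L w \<subseteq> hist_L v \<and> hist_R w \<subseteq> hist_R v"

definition reach :: "'a world \<Rightarrow> 'a world \<Rightarrow> bool" where
  "reach w v \<longleftrightarrow> w = v \<or> (boxed (cur_L w) \<subseteq> cur_L v \<and> level v < level w)"

fun holds_at :: "'a fm set \<Rightarrow> 'a world \<Rightarrow> 'a fm \<Rightarrow> bool" where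
  "holds_at C w Bot = False"
| "holds_at C w (Atom p) = (Atom p \<in> hist_L w)"
| "holds_at C w (Imp A B) = (holds_at C w A \<longrightarrow> holds_at C w B)"
| "holds_at C w (Box A) = (\<forall>v. is_world C v \<longrightarrow> reach w v \<longrightarrow> holds_at C v A)"

context
  fixes C :: "'a fm set"
  assumes closed: "subfm_closed C"
begin

lemma candidateD:
  assumes "candidate C (World L R HL HR j)"
  shows "L \<subseteq> C" "R \<subseteq> C" "finite L" "finite R"
    and "\<not> by_rule (approx C j) (derivable (approx C j)) L R"
proof -
  show L: "L \<subseteq> C" and R: "R \<subseteq> C"
    using assms by (auto simp: candidate_def refuted_def sequents_over_def)
  have "finite C"
    using closed by (simp add: subfm_closed_def)
  then show "finite L" "finite R"
    using L R finite_subset by auto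
  have "(L, R) \<notin> derivable (approx C j)"
    using assms by (simp add: candidate_def refuted_def)
  then show "\<not> by_rule (approx C j) (derivable (approx C j)) L R"
    by (simp add: derivable_iff_by_rule)
qed

lemma refinesI:
  assumes "candidate C (World L R HL HR j)" "L' \<subseteq> C" "R' \<subseteq> C" "(L', R') \<notin> derivable (approx C j)"
    "history_inv C L' R' HL' HR'" "boxed L \<subseteq> L'" "HL \<subseteq> HL'" "HR \<subseteq> HR'"
    and lighter: "card (Box -` C - HL') < card (Box -` C - HL) \<or> weight L' + weight R' < weight L + weight R"
  shows "refines C (World L R HL HR j) (World L' R' HL' HR' j)"
proof -
  have "finite (Box -` C - HL)"
    using closed unfolding subfm_closed_def by (simp add: finite_vimageI inj_def)
  then have "card (Box -` C - HL') \<le> card (Box -` C - HL)"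
    using \<open>HL \<subseteq> HL'\<close> by (intro card_mono) auto
  then show ?thesis
    using assms by (auto simp: refines_def candidate_def refuted_def sequents_over_def sat_measure_def)
qed

lemma refines_ImpL:
  assumes w: "candidate C (World L R HL HR j)" and "Imp A B \<in> L"
  shows "\<exists>v. refines C (World L R HL HR j) v"
proof -
  note facts = candidateD[OF w]
  have AB: "A \<in> C" "B \<in> C"
    using closed facts(1) \<open>Imp A B \<in> L\<close> unfolding subfm_closed_def by blast+
  have inv: "history_inv C L R HL HR"
    using w by (simp add: candidate_def)
  have weight: "weight (L - {Imp A B}) + size A + size B < weight L"
    using weight_remove[OF facts(3) \<open>Imp A B \<in> L\<close>] by simp
  have boxed: "boxed L \<subseteq> L - {Imp A B}"
    unfolding boxed_def by auto
  have "(L - {Imp A B} \<union> {B}, R) \<notin> derivable (approx C j) \<or>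
      (L - {Imp A B}, R \<union> {A}) \<notin> derivable (approx C j)"
    using facts(5) \<open>Imp A B \<in> L\<close> unfolding by_rule_def by blast
  then show ?thesis
  proof
    assume "(L - {Imp A B} \<union> {B}, R) \<notin> derivable (approx C j)"
    moreover have "weight (L - {Imp A B} \<union> {B}) \<le> weight (L - {Imp A B}) + size B"
      using facts(3) by (simp add: weight_insert_le)
    ultimately show ?thesis
      using facts AB inv weight boxed
      by (intro exI[of _ "World (L - {Imp A B} \<union> {B}) R (HL \<union> {B}) HR j"] refinesI[OF w])
        (auto simp: history_inv_def)
  next
    assume "(L - {Imp A B}, R \<union> {A}) \<notin> derivable (approx C j)"
    moreover have "weight (R \<union> {A}) \<le> weight R + size A"
      using facts(4) by (simp add: weight_insert_le)
    ultimately show ?thesis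
      using facts AB inv weight boxed
      by (intro exI[of _ "World (L - {Imp A B}) (R \<union> {A}) HL (HR \<union> {A}) j"] refinesI[OF w])
        (auto simp: history_inv_def)
  qed
qed

lemma refines_ImpR:
  assumes w: "candidate C (World L R HL HR j)" and "Imp A B \<in> R"
  shows "\<exists>v. refines C (World L R HL HR j) v"
proof -
  note facts = candidateD[OF w]
  have AB: "A \<in> C" "B \<in> C"
    using closed facts(2) \<open>Imp A B \<in> R\<close> unfolding subfm_closed_def by blast+
  have inv: "history_inv C L R HL HR"
    using w by (simp add: candidate_def)
  have "weight (insert A L) \<le> weight L + size A" "weight (insert B (R - {Imp A B})) \<le> weight (R - {Imp A B}) + size B"
    using facts(3,4) by (simp_all add: weight_insert_le)
  moreover have "weight (R - {Imp A B}) + size A + size B < weight R"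
    using weight_remove[OF facts(4) \<open>Imp A B \<in> R\<close>] by simp
  moreover have "(L \<union> {A}, R - {Imp A B} \<union> {B}) \<notin> derivable (approx C j)"
    using facts(5) \<open>Imp A B \<in> R\<close> unfolding by_rule_def by blast
  ultimately show ?thesis
    using facts AB inv
    by (intro exI[of _ "World (L \<union> {A}) (R - {Imp A B} \<union> {B}) (HL \<union> {A}) (HR \<union> {B}) j"] refinesI[OF w])
      (auto simp: history_inv_def boxed_def)
qed

lemma refines_Refl:
  assumes w: "candidate C (World L R HL HR j)" and "Box B \<in> L" "B \<notin> HL"
  shows "\<exists>v. refines C (World L R HL HR j) v"
proof -
  note facts = candidateD[OF w]
  have "B \<in> Box -` C"
    using facts(1) \<open>Box B \<in> L\<close> by auto
  moreover have "finite (Box -` C - HL)"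
    using closed unfolding subfm_closed_def by (simp add: finite_vimageI inj_def)
  ultimately have "card (Box -` C - (HL \<union> {B})) < card (Box -` C - HL)"
    using \<open>B \<notin> HL\<close> by (intro psubset_card_mono) auto
  moreover have "B \<in> C"
    using closed facts(1) \<open>Box B \<in> L\<close> unfolding subfm_closed_def by blast
  moreover have "history_inv C L R HL HR"
    using w by (simp add: candidate_def)
  moreover have "(L \<union> {B}, R) \<notin> derivable (approx C j)"
    using facts(5) \<open>Box B \<in> L\<close> unfolding by_rule_def by blast
  ultimately show ?thesis
    using facts
    by (intro exI[of _ "World (L \<union> {B}) R (HL \<union> {B}) HR j"] refinesI[OF w])
      (auto simp: history_inv_def boxed_def)
qed

lemma refines_BoxR:
  assumes w: "candidate C (World L R HL HR j)" and "Box A \<in> R"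
    and "(L, R - {Box A} \<union> {A}) \<notin> derivable (approx C j)"
  shows "\<exists>v. refines C (World L R HL HR j) v"
proof -
  note facts = candidateD[OF w]
  have "A \<in> C"
    using closed facts(2) \<open>Box A \<in> R\<close> unfolding subfm_closed_def by blast
  moreover have "history_inv C L R HL HR"
    using w by (simp add: candidate_def)
  moreover have "weight (insert A (R - {Box A})) \<le> weight (R - {Box A}) + size A"
    using facts(4) by (simp add: weight_insert_le)
  moreover have "weight (R - {Box A}) + size A < weight R"
    using weight_remove[OF facts(4) \<open>Box A \<in> R\<close>] by simp
  ultimately show ?thesis
    using facts assms(3)
    by (intro exI[of _ "World L (R - {Box A} \<union> {A}) HL (HR \<union> {A}) j"] refinesI[OF w])
      (auto simp: history_inv_def boxed_def)
qed

lemma saturated_or_refines: "candidate C w \<Longrightarrow> saturated C w \<or> (\<exists>v. refines C w v)"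
  by (cases w) (auto simp: saturated_def intro: refines_ImpL refines_ImpR refines_Refl refines_BoxR)

lemma world_extending_candidate:
  assumes "candidate C w"
  shows "\<exists>v. is_world C v \<and> level v = level w \<and> boxed (cur_L w) \<subseteq> cur_L v \<and>
    hist_L w \<subseteq> hist_L v \<and> hist_R w \<subseteq> hist_R v"
  using assms
proof (induction "sat_measure C w" arbitrary: w rule: less_induct)
  case less
  show ?case
  proof (cases "saturated C w")
    case True
    with less.prems show ?thesis
      by (intro exI[of _ w]) (auto simp: is_world_def boxed_def)
  next
    case False
    then obtain v where v: "refines C w v"
      using saturated_or_refines[OF less.prems] by blast
    then obtain u where "is_world C u" "level u = level v" "boxed (cur_L v) \<subseteq> cur_L u"
        "hist_L v \<subseteq> hist_L u" "hist_R v \<subseteq> hist_R u"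
      using less.hyps unfolding refines_def by blast
    moreover have "boxed (cur_L w) \<subseteq> cur_L u"
      using v \<open>boxed (cur_L v) \<subseteq> cur_L u\<close> unfolding refines_def boxed_def by blast
    ultimately show ?thesis
      using v unfolding refines_def by (intro exI[of _ u]) auto
  qed
qed

lemma world_not_axiom: "is_world C w \<Longrightarrow> \<not> is_axiom (cur_L w) (cur_R w)"
  using candidateD[of "cur_L w" "cur_R w" "hist_L w" "hist_R w" "level w"]
  by (auto simp: is_world_def by_rule_def)

text \<open>The left premise of (Box) is derivable by saturation while (L, R) is not, so the right
  premise (boxed L, {A}) is missing from approx C j and hence refuted one level lower.\<close>
lemma Box_in_cur_R_lower_world:
  assumes "is_world C w" "Box A \<in> cur_R w"
  shows "\<exists>v. is_world C v \<and> level v < level w \<and> boxed (cur_L w) \<subseteq> cur_L v \<and> A \<in> hist_R v"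
proof -
  obtain L R HL HR j where w: "w = World L R HL HR j"
    by (cases w)
  then have cand: "candidate C (World L R HL HR j)"
    using assms(1) by (simp add: is_world_def)
  note facts = candidateD[OF cand]
  have "(L, R - {Box A} \<union> {A}) \<in> derivable (approx C j)"
    using assms w by (simp add: is_world_def saturated_def)
  moreover have "Box A \<in> R"
    using assms(2) w by simp
  ultimately have "(boxed L, {A}) \<notin> approx C j"
    using facts(5) by_rule_BoxR by blast
  moreover have "boxed L \<subseteq> C"
    using facts(1) unfolding boxed_def by blast
  moreover have "A \<in> C"
    using facts(2) \<open>Box A \<in> R\<close> closed unfolding subfm_closed_def by blast
  ultimately obtain j' where "j = Suc j'" "(boxed L, {A}) \<notin> derivable (approx C j')"
    by (cases j) (auto simp: sequents_over_def)
  moreover have "history_inv C (boxed L) {A} (boxed L) {A}"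
    using \<open>boxed L \<subseteq> C\<close> \<open>A \<in> C\<close> unfolding history_inv_def by auto
  ultimately have "candidate C (World (boxed L) {A} (boxed L) {A} j')"
    using \<open>boxed L \<subseteq> C\<close> \<open>A \<in> C\<close> by (simp add: candidate_def refuted_def sequents_over_def)
  from world_extending_candidate[OF this] obtain v where "is_world C v" "level v = j'"
      "boxed (boxed L) \<subseteq> cur_L v" "A \<in> hist_R v"
    by auto
  then show ?thesis
    using w \<open>j = Suc j'\<close> unfolding boxed_def by (intro exI[of _ v]) auto
qed

lemma hist_L_Box_reach:
  assumes "is_world C w" "Box A \<in> hist_L w" "is_world C v" "reach w v"
  shows "A \<in> hist_L v"
proof -
  have "Box A \<in> cur_L w"
    using assms(1,2) by (auto simp: is_world_def candidate_def history_inv_def)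
  then have "Box A \<in> cur_L v"
    using assms(4) unfolding reach_def boxed_def by auto
  then show ?thesis
    using assms(3) by (auto simp: is_world_def saturated_def)
qed

lemma hist_R_Box_reach:
  assumes "is_world C w" "Box A \<in> hist_R w"
  shows "\<exists>v. is_world C v \<and> reach w v \<and> A \<in> hist_R v"
proof (cases "A \<in> hist_R w")
  case False
  then have "Box A \<in> cur_R w"
    using assms by (auto simp: is_world_def candidate_def history_inv_def)
  then show ?thesis
    using Box_in_cur_R_lower_world[OF assms(1)] unfolding reach_def by blast
qed (use assms reach_def in blast)

lemma truth_lemma:
  assumes "is_world C w"
  shows "(F \<in> hist_L w \<longrightarrow> holds_at C w F) \<and> (F \<in> hist_R w \<longrightarrow> \<not> holds_at C w F)"
  using assms
proof (induction F arbitrary: w)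
  case Bot
  then show ?case
    using world_not_axiom[OF Bot] by (auto simp: is_world_def candidate_def history_inv_def is_axiom_def)
next
  case (Atom p)
  then show ?case
    using world_not_axiom[OF Atom] by (auto simp: is_world_def candidate_def history_inv_def is_axiom_def)
next
  case (Imp A B)
  then have "Imp A B \<notin> cur_L w" "Imp A B \<notin> cur_R w"
    by (auto simp: is_world_def saturated_def)
  moreover have "history_inv C (cur_L w) (cur_R w) (hist_L w) (hist_R w)"
    using Imp.prems by (simp add: is_world_def candidate_def)
  ultimately have "Imp A B \<in> hist_L w \<longrightarrow> B \<in> hist_L w \<or> A \<in> hist_R w"
    "Imp A B \<in> hist_R w \<longrightarrow> A \<in> hist_L w \<and> B \<in> hist_R w"
    unfolding history_inv_def by blast+
  then show ?case
    using Imp.IH[OF Imp.prems] by auto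
next
  case (Box A)
  have "holds_at C w (Box A)" if "Box A \<in> hist_L w"
    using hist_L_Box_reach[OF Box.prems that] Box.IH by auto
  moreover have "\<not> holds_at C w (Box A)" if "Box A \<in> hist_R w"
    using hist_R_Box_reach[OF Box.prems that] Box.IH by auto
  ultimately show ?case
    by blast
qed

end

lemma reach_trans: "reach w v \<Longrightarrow> reach v u \<Longrightarrow> reach w u"
  unfolding reach_def boxed_def by auto

lemma grz_model_worlds: "grz_model (is_world C) (holds_at C) level"
proof
  fix w A
  assume "is_world C w" "\<not> holds_at C w (Box A)" "holds_at C w A"
  then obtain v where v: "is_world C v" "reach w v" "\<not> holds_at C v A"
    by auto
  with \<open>holds_at C w A\<close> have "level v < level w"
    unfolding reach_def by auto
  moreover have "holds_at C w (Box B) \<longrightarrow> holds_at C v (Box B)" for B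
    using v(2) reach_trans by auto
  ultimately show "\<exists>v. is_world C v \<and> level v < level w \<and> \<not> holds_at C v A \<and>
      (\<forall>B. holds_at C w (Box B) \<longrightarrow> holds_at C v (Box B))"
    using v by blast
qed (auto simp: reach_def)

section \<open>Completeness and cut admissibility\<close>

theorem cut_free_proof_or_countermodel:
  "(\<exists>t. proof_of t (\<Gamma>, \<Delta>) \<and> cut_free t) \<or> (\<exists>C w. is_world C w \<and> falsifies (holds_at C) w (\<Gamma>, \<Delta>))"
proof -
  define C where "C = (\<Union>F \<in> set_mset \<Gamma> \<union> set_mset \<Delta>. subfms F)"
  have closed: "subfm_closed C"
    unfolding C_def by (rule subfm_closed_subfms) simp
  then obtain J where J: "approx C (Suc J) = approx C J"
    using approx_stabilizes unfolding subfm_closed_def by blast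
  have over: "(set_mset \<Gamma>, set_mset \<Delta>) \<in> sequents_over C"
    unfolding C_def sequents_over_def using mem_subfms_self by blast
  show ?thesis
  proof (cases "(set_mset \<Gamma>, set_mset \<Delta>) \<in> approx C J")
    case True
    have "approx C J \<subseteq> derivable (approx C J)"
      using J by (metis Int_lower1 approx.simps(2))
    with True show ?thesis
      using cut_free_proof_of_post_fixed_point by blast
  next
    case False
    with J over have "candidate C (World (set_mset \<Gamma>) (set_mset \<Delta>) (set_mset \<Gamma>) (set_mset \<Delta>) J)"
      by (auto simp: candidate_def refuted_def history_inv_def sequents_over_def)
    then obtain w where "is_world C w" "set_mset \<Gamma> \<subseteq> hist_L w" "set_mset \<Delta> \<subseteq> hist_R w"
      using world_extending_candidate[OF closed] by fastforce
    then have "falsifies (holds_at C) w (\<Gamma>, \<Delta>)"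
      using truth_lemma[OF closed] unfolding falsifies_def by fastforce
    with \<open>is_world C w\<close> show ?thesis
      by blast
  qed
qed

theorem cut_admissible:
  assumes "proof_of \<pi> (\<Gamma>, \<Delta> + {#A#})" "proof_of \<tau> (\<Gamma> + {#A#}, \<Delta>)"
  shows "\<exists>t. proof_of t (\<Gamma>, \<Delta>) \<and> cut_free t"
proof -
  have False if "is_world C w" "falsifies (holds_at C) w (\<Gamma>, \<Delta>)" for C w
  proof -
    interpret grz_model "is_world C" "holds_at C" level
      by (rule grz_model_worlds)
    show False
    proof (cases "holds_at C w A")
      case True
      with that have "falsifies (holds_at C) w (seq_of \<tau>)"
        using assms(2) by (auto simp: proof_of_def falsifies_def)
      then show False
        using proof_not_falsified assms(2) that(1) unfolding proof_of_def by blast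
    next
      case False
      with that have "falsifies (holds_at C) w (seq_of \<pi>)"
        using assms(1) by (auto simp: proof_of_def falsifies_def)
      then show False
        using proof_not_falsified assms(1) that(1) unfolding proof_of_def by blast
    qed
  qed
  then show ?thesis
    using cut_free_proof_or_countermodel by blast
qed

text \<open>Unless it returns its first argument, the mapping depends on the two proofs only
  through their end sequents; this is what makes it non-expansive.\<close>
definition cut_reduct :: "'a fm \<Rightarrow> 'a dtree \<Rightarrow> 'a dtree \<Rightarrow> 'a dtree" where
  "cut_reduct A \<pi> \<tau> =
     (if \<exists>\<Gamma> \<Delta>. seq_of \<pi> = (\<Gamma>, \<Delta> + {#A#}) \<and> seq_of \<tau> = (\<Gamma> + {#A#}, \<Delta>)
      then SOME t. proof_of t (fst (seq_of \<pi>), snd (seq_of \<tau>)) \<and> cut_free t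
      else \<pi>)"

lemma cut_reduct_cut_pair:
  assumes "proof_of \<pi> (\<Gamma>, \<Delta> + {#A#})" "proof_of \<tau> (\<Gamma> + {#A#}, \<Delta>)"
  shows "proof_of (cut_reduct A \<pi> \<tau>) (\<Gamma>, \<Delta>) \<and> cut_free (cut_reduct A \<pi> \<tau>)"
proof -
  have "cut_reduct A \<pi> \<tau> = (SOME t. proof_of t (\<Gamma>, \<Delta>) \<and> cut_free t)"
    using assms unfolding cut_reduct_def proof_of_def by auto
  then show ?thesis
    using someI_ex[OF cut_admissible[OF assms]] by simp
qed

lemma cut_reduct_cases:
  assumes "is_proof \<pi>" "is_proof \<tau>"
  shows "cut_reduct A \<pi> \<tau> = \<pi> \<or> is_proof (cut_reduct A \<pi> \<tau>) \<and> cut_free (cut_reduct A \<pi> \<tau>)"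
proof (cases "\<exists>\<Gamma> \<Delta>. seq_of \<pi> = (\<Gamma>, \<Delta> + {#A#}) \<and> seq_of \<tau> = (\<Gamma> + {#A#}, \<Delta>)")
  case True
  then obtain \<Gamma> \<Delta> where "proof_of \<pi> (\<Gamma>, \<Delta> + {#A#})" "proof_of \<tau> (\<Gamma> + {#A#}, \<Delta>)"
    using assms unfolding proof_of_def by blast
  then show ?thesis
    using cut_reduct_cut_pair unfolding proof_of_def by blast
next
  case False
  then have "cut_reduct A \<pi> \<tau> = \<pi>"
    unfolding cut_reduct_def by (rule if_not_P)
  then show ?thesis ..
qed

lemma sim_seq_of:
  assumes "0 < n" "sim n t u"
  shows "seq_of t = seq_of u"
proof -
  have "frag n t [] = frag n u []"
    using assms unfolding sim_def by simp
  with \<open>0 < n\<close> show ?thesis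
    unfolding frag_def by simp
qed

lemma non_expansive_cut_reduct: "non_expansive (cut_reduct A)"
  unfolding non_expansive_def
proof (intro allI impI)
  fix n and \<pi> \<pi>' \<tau> \<tau>' :: "'a dtree"
  assume "sim n \<pi> \<pi>'" "sim n \<tau> \<tau>'"
  then consider "n = 0" | "seq_of \<pi> = seq_of \<pi>'" "seq_of \<tau> = seq_of \<tau>'"
    using sim_seq_of by blast
  then show "sim n (cut_reduct A \<pi> \<tau>) (cut_reduct A \<pi>' \<tau>')"
    by cases (use \<open>sim n \<pi> \<pi>'\<close> in \<open>auto simp: sim_def cut_reduct_def\<close>)
qed

lemma cut_free_mem_proofs_n: "is_proof t \<Longrightarrow> cut_free t \<Longrightarrow> t \<in> proofs_n n"
  unfolding proofs_n_def proofs_def cut_free_def by blast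

theorem lemma6p4:
  fixes A :: "'a fm"
  shows "\<exists>u :: 'a dtree \<Rightarrow> 'a dtree \<Rightarrow> 'a dtree. removing A u \<and> adequate u"
proof (intro exI conjI)
  have reduct: "cut_reduct A \<pi> \<tau> = \<pi> \<or> is_proof (cut_reduct A \<pi> \<tau>) \<and> cut_free (cut_reduct A \<pi> \<tau>)"
    if "\<pi> \<in> proofs" "\<tau> \<in> proofs" for \<pi> \<tau> :: "'a dtree"
    using cut_reduct_cases that unfolding proofs_def by blast
  show "removing A (cut_reduct A)"
    unfolding removing_def
  proof (intro conjI allI impI)
    fix \<pi> \<tau> :: "'a dtree"
    assume "\<pi> \<in> proofs" "\<tau> \<in> proofs"
    then show "cut_reduct A \<pi> \<tau> \<in> proofs"
      using reduct[of \<pi> \<tau>] unfolding proofs_def by auto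
  next
    fix \<pi> \<tau> :: "'a dtree" and \<Gamma> \<Delta>
    assume "proof_of \<pi> (\<Gamma>, \<Delta> + {#A#})" "proof_of \<tau> (\<Gamma> + {#A#}, \<Delta>)"
    then show "proof_of (cut_reduct A \<pi> \<tau>) (\<Gamma>, \<Delta>)"
      using cut_reduct_cut_pair by blast
  qed (rule non_expansive_cut_reduct)
  show "adequate (cut_reduct A)"
    unfolding adequate_def
  proof (intro allI impI)
    fix n and \<pi> \<tau> :: "'a dtree"
    assume "\<pi> \<in> proofs_n n" "\<tau> \<in> proofs_n n"
    then show "cut_reduct A \<pi> \<tau> \<in> proofs_n n"
      using reduct[of \<pi> \<tau>] cut_free_mem_proofs_n unfolding proofs_n_def proofs_def by auto
  qed
qed

end
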